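(* Let $n\ge4$, $r_1,r_2,r_3\in\mathbb{Z}_+$ with $r_1+r_2+r_3=n-1$, and let $-1<\alpha_1<1$, $0\le\alpha_2,\alpha_3<1$ with $\alpha_1+\alpha_2+\alpha_3=1$, $r_1-1+\alpha_1\ge r_2+\alpha_2$ and $r_1-1+\alpha_1\ge r_3+1+\alpha_3$. Then $$\mathfrak{L}_n(r_1-1,r_2,r_3+1,\alpha_1,\alpha_2,\alpha_3)\le \mathfrak{L}_n(r_1,r_2,r_3,\alpha_1,\alpha_2,\alpha_3)+2^{r_2+r_3+2}+\frac{2^{r_2}}{r_1}-1+\begin{cases}2^{r_3}, & r_2\ge1,\\ 2^{r_3+1}\ln n, & r_2=0.\end{cases}$$
   Context: Points of a triangle are identified with barycentric coordinates $\lambda=(\lambda_1,\lambda_2,\lambda_3)$, $\lambda_r\ge0$, $\sum\lambda_r=1$. For an integer $n\ge1$ let $I=\{i=(i_1,i_2,i_3)\in\mathbb{Z}_+^3: i_1+i_2+i_3=n\}$, and let $l_i(\lambda)=\prod_{s=1}^{3}\frac{1}{i_s!}\prod_{t=0}^{i_s-1}(n\lambda_s-t)$ (the Lagrange fundamental polynomials for the equally spaced nodes $i/n$, $i\in I$). The Lebesgue function is $\mathcal{L}_n(\lambda)=\sum_{i\in I}|l_i(\lambda)|$. For $r_s\in\mathbb{Z}_+$ with $r_1+r_2+r_3=n-1$ and reals $\alpha_s$ with $\alpha_1+\alpha_2+\alpha_3=1$, write $\mathfrak{L}_n(r_1,r_2,r_3,\alpha_1,\alpha_2,\alpha_3)=\mathcal{L}_n(\lambda)$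 where $\lambda_s=(r_s+\alpha_s)/n$, $s=1,2,3$. *)

theory Defs
  imports Complex_Main
begin

definition idx :: "nat \<Rightarrow> (nat \<times> nat \<times> nat) set" where
  "idx n = {(i1, i2, i3). i1 + i2 + i3 = n}"

definition lfac :: "nat \<Rightarrow> nat \<Rightarrow> real \<Rightarrow> real" where
  "lfac n k x = (1 / fact k) * (\<Prod>t<k. (real n * x - real t))"

definition lagr :: "nat \<Rightarrow> nat \<times> nat \<times> nat \<Rightarrow> real \<times> real \<times> real \<Rightarrow> real" where
  "lagr n i lam = (case i of (i1, i2, i3) \<Rightarrow> case lam of (l1, l2, l3) \<Rightarrow>
       lfac n i1 l1 * lfac n i2 l2 * lfac n i3 l3)"

definition lebesgue :: "nat \<Rightarrow> real \<times> real \<times> real \<Rightarrow> real" where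
  "lebesgue n lam = (\<Sum>i\<in>idx n. \<bar>lagr n i lam\<bar>)"

definition frakL :: "nat \<Rightarrow> nat \<Rightarrow> nat \<Rightarrow> nat \<Rightarrow> real \<Rightarrow> real \<Rightarrow> real \<Rightarrow> real" where
  "frakL n r1 r2 r3 a1 a2 a3 =
     lebesgue n ((real r1 + a1) / real n, (real r2 + a2) / real n, (real r3 + a3) / real n)"

end

theory Submission
  imports Defs
begin

text \<open>
  With \<open>A = r\<^sub>1 + \<alpha>\<^sub>1\<close>, \<open>B = r\<^sub>2 + \<alpha>\<^sub>2\<close>, \<open>C = r\<^sub>3 + \<alpha>\<^sub>3\<close>, the Lebesgue function is
  \<open>\<Sum>\<^sub>i\<^sub>j\<^sub>k |(A gchoose i)(B gchoose j)(C gchoose k)|\<close>. Moving from \<open>(A, B, C)\<close> to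
  \<open>(A - 1, B, C + 1)\<close> expresses every term by Pascal's rule in \<open>C\<close> and the absorption
  identities in \<open>A\<close> as a combination of two old terms with weights \<open>(A - i)/A\<close> and
  \<open>(i + 1)/A\<close>. After reindexing, the weights of each old term add up to \<open>(|A - i| + i)/A\<close>,
  which is \<open>1\<close> unless \<open>i > A\<close>; so the Lebesgue function grows at most by the terms with
  \<open>i > A\<close>. There \<open>|(A - 1) gchoose i| \<le> 1/(\<lfloor>A - 1\<rfloor> + 2)\<close>, while the sums over \<open>j\<close>
  and \<open>k\<close> are at most \<open>2\<^bsup>r\<^sub>2+1\<^esup>\<close> and \<open>2\<^bsup>r\<^sub>3+1\<^esup>\<close> up to a linear tail. An elementary
  inequality turns this into the increment \<open>2\<^bsup>r\<^sub>2+r\<^sub>3+2\<^esup>\<close>; the remaining terms of the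
  claimed bound are nonnegative.
\<close>

definition gchoose_prod :: "real \<Rightarrow> real \<Rightarrow> real \<Rightarrow> nat \<times> nat \<times> nat \<Rightarrow> real" where
  "gchoose_prod x y z = (\<lambda>(i, j, k). (x gchoose i) * (y gchoose j) * (z gchoose k))"

definition lebesgue_gchoose :: "nat \<Rightarrow> real \<Rightarrow> real \<Rightarrow> real \<Rightarrow> real" where
  "lebesgue_gchoose n x y z = (\<Sum>\<iota>\<in>idx n. \<bar>gchoose_prod x y z \<iota>\<bar>)"

text \<open>For \<open>i > A\<close> the excess weight \<open>2(i - A)/A\<close> of \<open>|A gchoose i|\<close> is absorbed into
  \<open>2 |(A - 1) gchoose i|\<close>.\<close>
definition shift_excess :: "nat \<Rightarrow> real \<Rightarrow> real \<Rightarrow> real \<Rightarrow> real" where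
  "shift_excess n x y z =
     (\<Sum>(i, j, k)\<in>idx n. if x < real i then 2 * \<bar>gchoose_prod (x - 1) y z (i, j, k)\<bar> else 0)"

lemma finite_idx [simp]: "finite (idx n)"
proof -
  have "idx n \<subseteq> {..n} \<times> {..n} \<times> {..n}"
    unfolding idx_def by auto
  then show ?thesis
    by (rule finite_subset) auto
qed

lemma lfac_eq_gbinomial: "n > 0 \<Longrightarrow> lfac n k (y / real n) = y gchoose k"
  unfolding lfac_def gbinomial_prod_rev by (simp add: atLeast0LessThan)

lemma frakL_eq_lebesgue_gchoose:
  assumes "n > 0"
  shows "frakL n r1 r2 r3 a1 a2 a3 = lebesgue_gchoose n (real r1 + a1) (real r2 + a2) (real r3 + a3)"
  unfolding frakL_def lebesgue_def lebesgue_gchoose_def lagr_def gchoose_prod_def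
  by (rule sum.cong) (auto simp: lfac_eq_gbinomial[OF assms])

section \<open>Bounds for generalized binomial coefficients\<close>

lemma gbinomial_Suc_eq: "(y::real) gchoose Suc j = (y gchoose j) * (y - real j) / real (Suc j)"
  using gbinomial_mult_1[of y j] by (simp add: field_simps del: of_nat_Suc)

lemma abs_gbinomial_le_binomial:
  fixes a :: real
  assumes "0 \<le> a" "a < 1" "j \<le> r + 1"
  shows "\<bar>(real r + a) gchoose j\<bar> \<le> real ((r + 1) choose j)"
proof -
  have "\<bar>((real r + a) gchoose j) * fact j\<bar> = (\<Prod>i = 0..<j. real r + a - of_nat i)"
    unfolding gbinomial_mult_fact' using assms by (intro abs_of_nonneg prod_nonneg) auto
  also have "\<dots> \<le> (\<Prod>i = 0..<j. real (r + 1) - of_nat i)"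
    using assms by (intro prod_mono) auto
  also have "\<dots> = real ((r + 1) choose j) * fact j"
    by (simp add: gbinomial_mult_fact'[symmetric] binomial_gbinomial)
  finally show ?thesis
    by (simp add: abs_mult)
qed

lemma abs_gbinomial_antimono:
  fixes y :: real
  assumes "-1 \<le> y" "y \<le> real m" "m \<le> j"
  shows "\<bar>y gchoose j\<bar> \<le> \<bar>y gchoose m\<bar>"
  using assms(3)
proof (induction j rule: dec_induct)
  case base
  then show ?case by simp
next
  case (step j)
  have "\<bar>y - real j\<bar> / real (Suc j) \<le> 1"
    using assms step by (simp add: field_simps abs_if)
  then have "\<bar>y gchoose j\<bar> * (\<bar>y - real j\<bar> / real (Suc j)) \<le> \<bar>y gchoose j\<bar>"
    by (rule mult_left_le) simp
  then show ?case
    using step by (simp add: gbinomial_Suc_eq abs_mult del: of_nat_Suc)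
qed

lemma abs_gbinomial_le_one:
  fixes y :: real
  assumes "real q \<le> y" "y < real q + 1" "q + 1 \<le> j"
  shows "\<bar>y gchoose j\<bar> \<le> 1"
proof -
  have "\<bar>y gchoose j\<bar> \<le> \<bar>y gchoose (q + 1)\<bar>"
    using assms by (intro abs_gbinomial_antimono) auto
  also have "\<dots> = \<bar>(real q + (y - real q)) gchoose (q + 1)\<bar>"
    by simp
  also have "\<dots> \<le> real ((q + 1) choose (q + 1))"
    using assms by (intro abs_gbinomial_le_binomial) auto
  finally show ?thesis
    by simp
qed

lemma abs_gbinomial_le_inverse:
  fixes y :: real
  assumes "real q \<le> y" "y < real q + 1" "q + 2 \<le> j"
  shows "\<bar>y gchoose j\<bar> \<le> 1 / (real q + 2)"
proof -
  have "\<bar>y gchoose j\<bar> \<le> \<bar>y gchoose Suc (q + 1)\<bar>"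
    using assms by (intro abs_gbinomial_antimono) auto
  also have "\<dots> = \<bar>y gchoose (q + 1)\<bar> * \<bar>y - real (q + 1)\<bar> / (real q + 2)"
    by (simp add: gbinomial_Suc_eq abs_mult del: of_nat_Suc)
  also have "\<dots> \<le> 1 / (real q + 2)"
    using assms abs_gbinomial_le_one[OF assms(1,2), of "q + 1"]
    by (intro divide_right_mono mult_le_one) auto
  finally show ?thesis .
qed

lemma sum_abs_gbinomial_le:
  fixes a :: real
  assumes "0 \<le> a" "a < 1"
  shows "(\<Sum>j\<le>K. \<bar>(real r + a) gchoose j\<bar>) \<le> 2 ^ (r + 1) + real (K - (r + 1))"
proof -
  let ?g = "\<lambda>j. \<bar>(real r + a) gchoose j\<bar>"
  have "(\<Sum>j\<le>K. ?g j) \<le> (\<Sum>j\<in>{..r + 1} \<union> {r + 2..K}. ?g j)"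
    by (intro sum_mono2) auto
  also have "\<dots> = (\<Sum>j\<le>r + 1. ?g j) + (\<Sum>j=r + 2..K. ?g j)"
    by (intro sum.union_disjoint) auto
  also have "(\<Sum>j\<le>r + 1. ?g j) \<le> (\<Sum>j\<le>r + 1. real ((r + 1) choose j))"
    using assms by (intro sum_mono abs_gbinomial_le_binomial) auto
  also have "\<dots> = 2 ^ (r + 1)"
    by (metis choose_row_sum of_nat_numeral of_nat_power of_nat_sum)
  also have "(\<Sum>j=r + 2..K. ?g j) \<le> (\<Sum>j=r + 2..K. 1)"
    using assms by (intro sum_mono abs_gbinomial_le_one[of r]) auto
  finally show ?thesis
    by simp
qed

lemma gbinomial_diff_one:
  fixes A :: real
  assumes "A \<noteq> 0"
  shows "(A - 1) gchoose i = (A - real i) / A * (A gchoose i)"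
  using gbinomial_absorb_comp[of A i] assms by (simp add: field_simps)

section \<open>The effect of the shift \<open>(A, B, C) \<mapsto> (A - 1, B, C + 1)\<close>\<close>

lemma gchoose_prod_shift:
  assumes "A \<noteq> 0"
  shows "gchoose_prod (A - 1) B (C + 1) (i, j, k) =
           (A - real i) / A * gchoose_prod A B C (i, j, k)
           + (if k > 0 then (real i + 1) / A * gchoose_prod A B C (i + 1, j, k - 1) else 0)"
proof -
  note absorb = gbinomial_diff_one[OF assms, of i]
  have absorb_Suc: "(A - 1) gchoose i = (real i + 1) / A * (A gchoose Suc i)"
    using gbinomial_absorption[of i A] assms by (simp add: field_simps)
  show ?thesis
  proof (cases k)
    case 0
    then show ?thesis
      by (simp add: gchoose_prod_def absorb)
  next
    case (Suc k')
    have "(C + 1) gchoose k = (C gchoose k) + (C gchoose k')"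
      using Suc by (simp add: gbinomial_Suc_Suc)
    then have "gchoose_prod (A - 1) B (C + 1) (i, j, k)
        = ((A - 1) gchoose i) * (B gchoose j) * (C gchoose k)
          + ((A - 1) gchoose i) * (B gchoose j) * (C gchoose k')"
      by (simp add: gchoose_prod_def algebra_simps)
    also have "\<dots> = (A - real i) / A * gchoose_prod A B C (i, j, k)
          + (real i + 1) / A * gchoose_prod A B C (i + 1, j, k')"
      unfolding gchoose_prod_def
      by (subst (1) absorb, subst absorb_Suc) (simp add: mult.assoc)
    finally show ?thesis
      using Suc by simp
  qed
qed

lemma sum_idx_shift:
  fixes h :: "nat \<times> nat \<times> nat \<Rightarrow> real"
  assumes "\<And>j k. h (0, j, k) = 0"
  shows "(\<Sum>(i, j, k)\<in>idx n. if k > 0 then h (i + 1, j, k - 1) else 0) = (\<Sum>\<iota>\<in>idx n. h \<iota>)"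
proof -
  have "(\<Sum>(i, j, k)\<in>idx n. if k > 0 then h (i + 1, j, k - 1) else 0)
      = (\<Sum>(i, j, k)\<in>{(i, j, k)\<in>idx n. k > 0}. if k > 0 then h (i + 1, j, k - 1) else 0)"
    by (intro sum.mono_neutral_right) (auto split: if_splits)
  also have "\<dots> = (\<Sum>\<iota>\<in>{(i, j, k)\<in>idx n. i > 0}. h \<iota>)"
    by (rule sum.reindex_bij_witness[where i="\<lambda>(i, j, k). (i - 1, j, k + 1)"
          and j="\<lambda>(i, j, k). (i + 1, j, k - 1)"]) (auto simp: idx_def)
  also have "\<dots> = (\<Sum>\<iota>\<in>idx n. h \<iota>)"
    using assms by (intro sum.mono_neutral_left finite_idx) (auto simp: idx_def intro!: gr0I)
  finally show ?thesis .
qed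

lemma abs_gchoose_prod_reweight:
  assumes "A > 0"
  shows "\<bar>A - real i\<bar> / A * \<bar>gchoose_prod A B C (i, j, k)\<bar> + real i / A * \<bar>gchoose_prod A B C (i, j, k)\<bar>
     = \<bar>gchoose_prod A B C (i, j, k)\<bar>
       + (if A < real i then 2 * \<bar>gchoose_prod (A - 1) B C (i, j, k)\<bar> else 0)"
proof (cases "A < real i")
  case True
  have "(A - 1) gchoose i = (A - real i) / A * (A gchoose i)"
    using assms by (simp add: gbinomial_diff_one)
  then have "\<bar>gchoose_prod (A - 1) B C (i, j, k)\<bar> = (real i - A) / A * \<bar>gchoose_prod A B C (i, j, k)\<bar>"
    using assms True by (simp add: gchoose_prod_def abs_mult abs_div)
  then show ?thesis
    using True assms by (simp add: field_simps)
next
  case False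
  then show ?thesis
    using assms by (simp add: field_simps)
qed

lemma lebesgue_gchoose_shift_le:
  assumes "A > 0"
  shows "lebesgue_gchoose n (A - 1) B (C + 1) \<le> lebesgue_gchoose n A B C + shift_excess n A B C"
proof -
  let ?o = "\<lambda>\<iota>. \<bar>gchoose_prod A B C \<iota>\<bar>"
  have "lebesgue_gchoose n (A - 1) B (C + 1)
      \<le> (\<Sum>(i, j, k)\<in>idx n. \<bar>A - real i\<bar> / A * ?o (i, j, k)
           + (if k > 0 then (real i + 1) / A * ?o (i + 1, j, k - 1) else 0))"
    unfolding lebesgue_gchoose_def
  proof (intro sum_mono, clarify)
    fix i j k
    show "\<bar>gchoose_prod (A - 1) B (C + 1) (i, j, k)\<bar>
        \<le> \<bar>A - real i\<bar> / A * ?o (i, j, k) + (if k > 0 then (real i + 1) / A * ?o (i + 1, j, k - 1) else 0)"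
      using assms unfolding gchoose_prod_shift[OF less_imp_neq[OF assms, symmetric]]
      by (auto simp: abs_mult abs_div intro: abs_triangle_ineq[THEN order_trans])
  qed
  also have "\<dots> = (\<Sum>(i, j, k)\<in>idx n. \<bar>A - real i\<bar> / A * ?o (i, j, k))
      + (\<Sum>(i, j, k)\<in>idx n. if k > 0 then (\<lambda>(i, j, k). real i / A * ?o (i, j, k)) (i + 1, j, k - 1) else 0)"
    by (subst sum.distrib[symmetric]) (auto intro: sum.cong)
  also have "\<dots> = (\<Sum>(i, j, k)\<in>idx n. \<bar>A - real i\<bar> / A * ?o (i, j, k) + real i / A * ?o (i, j, k))"
    by (subst sum_idx_shift) (auto simp: sum.distrib split_def)
  also have "\<dots> = lebesgue_gchoose n A B C + shift_excess n A B C"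
    unfolding lebesgue_gchoose_def shift_excess_def sum.distrib[symmetric]
    using abs_gchoose_prod_reweight[OF assms] by (auto intro: sum.cong)
  finally show ?thesis .
qed

lemma shift_excess_le:
  fixes q n :: nat
  assumes "real q \<le> A - 1" "A - 1 < real q + 1"
  defines "K \<equiv> n - (q + 2)"
  shows "shift_excess n A B C
     \<le> 2 / (real q + 2) * ((\<Sum>j\<le>K. \<bar>B gchoose j\<bar>) * (\<Sum>k\<le>K. \<bar>C gchoose k\<bar>))"
proof -
  let ?w = "\<lambda>(j, k). 2 / (real q + 2) * (\<bar>B gchoose j\<bar> * \<bar>C gchoose k\<bar>)"
  have "shift_excess n A B C \<le> (\<Sum>\<iota>\<in>idx n. if q + 2 \<le> fst \<iota> then ?w (snd \<iota>) else 0)"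
    unfolding shift_excess_def
  proof (intro sum_mono, clarify)
    fix i j k
    assume "(i, j, k) \<in> idx n"
    show "(if A < real i then 2 * \<bar>gchoose_prod (A - 1) B C (i, j, k)\<bar> else 0)
        \<le> (if q + 2 \<le> fst (i, j, k) then ?w (snd (i, j, k)) else 0)"
    proof (cases "A < real i")
      case True
      then have "q + 2 \<le> i"
        using assms by linarith
      with abs_gbinomial_le_inverse[OF assms(1,2)]
      have "2 * (\<bar>(A - 1) gchoose i\<bar> * (\<bar>B gchoose j\<bar> * \<bar>C gchoose k\<bar>))
          \<le> 2 * (1 / (real q + 2) * (\<bar>B gchoose j\<bar> * \<bar>C gchoose k\<bar>))"
        by (intro mult_left_mono mult_right_mono) auto
      with True \<open>q + 2 \<le> i\<close> show ?thesis
        by (simp add: gchoose_prod_def abs_mult mult.assoc)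
    qed simp
  qed
  also have "\<dots> = (\<Sum>\<iota>\<in>{\<iota>\<in>idx n. q + 2 \<le> fst \<iota>}. ?w (snd \<iota>))"
    by (rule sum.inter_filter[symmetric, OF finite_idx])
  also have "\<dots> = (\<Sum>jk\<in>snd ` {\<iota>\<in>idx n. q + 2 \<le> fst \<iota>}. ?w jk)"
    by (rule sum.reindex[symmetric, unfolded comp_def]) (auto intro: inj_onI simp: idx_def)
  also have "\<dots> \<le> (\<Sum>jk\<in>{..K} \<times> {..K}. ?w jk)"
    by (rule sum_mono2) (auto simp: idx_def K_def)
  also have "\<dots> = 2 / (real q + 2) * (\<Sum>j\<le>K. \<Sum>k\<le>K. \<bar>B gchoose j\<bar> * \<bar>C gchoose k\<bar>)"
    by (simp add: sum_distrib_left sum.cartesian_product split_def)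
  also have "\<dots> = 2 / (real q + 2) * ((\<Sum>j\<le>K. \<bar>B gchoose j\<bar>) * (\<Sum>k\<le>K. \<bar>C gchoose k\<bar>))"
    by (simp add: sum_product)
  finally show ?thesis .
qed

lemma four_mult_pred_le_two_power: "4 * (real k - 1) \<le> 2 ^ k"
proof (cases "2 \<le> k")
  case True
  then show ?thesis
  proof (induction k rule: dec_induct)
    case (step k)
    have "(1::real) \<le> 2 ^ k"
      by simp
    with step show ?case
      by simp
  qed simp
next
  case False
  then have "k = 0 \<or> k = 1"
    by linarith
  then show ?thesis
    by auto
qed

lemma double_product_le:
  fixes a b x y X Y M :: real
  assumes X: "4 \<le> X" "4 * (a - 1) \<le> X" and Y: "4 \<le> Y" "4 * (b - 1) \<le> Y"
    and "0 \<le> x" "x \<le> b - 1" "0 \<le> y" "y \<le> a - 1" "a + 1 \<le> M" "b + 2 \<le> M"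
  shows "2 * ((X + x) * (Y + y)) \<le> M * (X * Y)"
proof -
  \<comment> \<open>Each summand of \<open>2(X + x)(Y + y)\<close> beyond \<open>2XY\<close> is small compared to \<open>XY\<close>,
      and \<open>M\<close> dominates the mean \<open>(a + b + 3)/2\<close> of its two lower bounds.\<close>
  have yX: "2 * (y * X) \<le> (a - 1) * (X * Y) / 2"
  proof -
    have "y * X \<le> (a - 1) * X"
      using assms by (intro mult_right_mono) auto
    moreover have "(a - 1) * X * 4 \<le> (a - 1) * X * Y"
      using assms by (intro mult_left_mono[OF Y(1)]) auto
    ultimately show ?thesis
      by (simp add: mult.assoc)
  qed
  have xY: "2 * (x * Y) \<le> (b - 1) * (X * Y) / 2"
  proof -
    have "x * Y \<le> (b - 1) * Y"
      using assms by (intro mult_right_mono) auto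
    moreover have "(b - 1) * Y * 4 \<le> (b - 1) * Y * X"
      using assms by (intro mult_left_mono[OF X(1)]) auto
    ultimately show ?thesis
      by (simp add: algebra_simps)
  qed
  have xy: "2 * (x * y) \<le> X * Y / 8"
  proof -
    have "x * y \<le> (b - 1) * (a - 1)"
      using assms by (intro mult_mono) auto
    moreover have "(4 * (b - 1)) * (4 * (a - 1)) \<le> Y * X"
      using assms by (intro mult_mono[OF Y(2) X(2)]) auto
    ultimately show ?thesis
      by (simp add: algebra_simps)
  qed
  have "2 * ((X + x) * (Y + y)) = 2 * (X * Y) + 2 * (y * X) + 2 * (x * Y) + 2 * (x * y)"
    by (simp add: algebra_simps)
  also have "\<dots> \<le> 2 * (X * Y) + (a - 1) * (X * Y) / 2 + (b - 1) * (X * Y) / 2 + X * Y / 8"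
    using yX xY xy by linarith
  also have "\<dots> = ((a + b) / 2 + 9 / 8) * (X * Y)"
    by (simp add: field_simps)
  also have "\<dots> \<le> M * (X * Y)"
    using assms by (intro mult_right_mono) (simp_all add: field_simps)
  finally show ?thesis .
qed

lemma two_power_product_le:
  fixes a b x y :: nat and M :: real
  assumes "1 \<le> a" "1 \<le> b" "x + 1 \<le> b" "y + 1 \<le> a" "real a + 1 \<le> M" "real b + 2 \<le> M"
  shows "2 / M * ((2 ^ a + real x) * (2 ^ b + real y)) \<le> 2 ^ (a + b)"
proof -
  define X Y :: real where "X = 2 ^ a" and "Y = 2 ^ b"
  have "0 < X" "0 < Y"
    by (simp_all add: X_def Y_def)
  have "2 * ((X + real x) * (Y + real y)) \<le> M * (X * Y)"
  proof -
    consider "b = 1" | "a = 1" | "2 \<le> a" "2 \<le> b"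
      using assms by linarith
    then show ?thesis
    proof cases
      case 1
      with assms \<open>0 < X\<close> have "2 * ((X + real x) * (Y + real y)) \<le> 2 * (X * (real a + 1))"
        by (simp add: Y_def mult_left_mono)
      also have "\<dots> \<le> M * (X * Y)"
        using 1 assms \<open>0 < X\<close> by (simp add: Y_def mult_left_mono)
      finally show ?thesis .
    next
      case 2
      with assms \<open>0 < Y\<close> have "2 * ((X + real x) * (Y + real y)) \<le> 2 * ((real b + 1) * Y)"
        by (simp add: X_def mult_right_mono)
      also have "\<dots> \<le> M * (X * Y)"
        using 2 assms \<open>0 < Y\<close> by (simp add: X_def mult_right_mono)
      finally show ?thesis .
    next
      case 3
      have "4 \<le> X" "4 \<le> Y"
        using 3 power_increasing[of 2 a "2::real"] power_increasing[of 2 b "2::real"]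
        by (auto simp: X_def Y_def)
      moreover have "4 * (real a - 1) \<le> X" "4 * (real b - 1) \<le> Y"
        unfolding X_def Y_def by (rule four_mult_pred_le_two_power)+
      ultimately show ?thesis
        using assms by (intro double_product_le) auto
    qed
  qed
  moreover have "0 < M"
    using assms by linarith
  ultimately show ?thesis
    by (simp add: X_def Y_def field_simps power_add)
qed

lemma shift_excess_le_two_power:
  fixes q n r2 r3 :: nat
  assumes q: "real q \<le> A - 1" "A - 1 < real q + 1"
    and "r2 \<le> q" "r3 + 1 \<le> q" "n \<le> q + r2 + r3 + 3"
    and "0 \<le> a2" "a2 < 1" "0 \<le> a3" "a3 < 1"
  shows "shift_excess n A (real r2 + a2) (real r3 + a3) \<le> 2 ^ (r2 + r3 + 2)"
proof -
  define K where "K = n - (q + 2)"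
  have "shift_excess n A (real r2 + a2) (real r3 + a3)
      \<le> 2 / (real q + 2) * ((\<Sum>j\<le>K. \<bar>(real r2 + a2) gchoose j\<bar>) * (\<Sum>k\<le>K. \<bar>(real r3 + a3) gchoose k\<bar>))"
    unfolding K_def by (rule shift_excess_le[OF q])
  also have "\<dots> \<le> 2 / (real q + 2) * ((2 ^ (r2 + 1) + real (K - (r2 + 1))) * (2 ^ (r3 + 1) + real (K - (r3 + 1))))"
    using assms by (intro mult_left_mono mult_mono sum_abs_gbinomial_le sum_nonneg) auto
  also have "\<dots> \<le> 2 ^ (r2 + r3 + 2)"
    using two_power_product_le[of "r2 + 1" "r3 + 1" "K - (r2 + 1)" "K - (r3 + 1)" "real q + 2"] assms
    by (simp add: K_def add_ac)
  finally show ?thesis .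
qed

lemma one_le_ln_of_nat: "3 \<le> n \<Longrightarrow> 1 \<le> ln (real n)"
  using exp_le by (subst ln_ge_iff) auto

theorem lemma14:
  fixes n r1 r2 r3 :: nat and a1 a2 a3 :: real
  assumes "n \<ge> 4"
    and "r1 + r2 + r3 = n - 1"
    and "-1 < a1" and "a1 < 1"
    and "0 \<le> a2" and "a2 < 1"
    and "0 \<le> a3" and "a3 < 1"
    and "a1 + a2 + a3 = 1"
    and "real r1 - 1 + a1 \<ge> real r2 + a2"
    and "real r1 - 1 + a1 \<ge> real r3 + 1 + a3"
  shows "frakL n (r1 - 1) r2 (r3 + 1) a1 a2 a3
           \<le> frakL n r1 r2 r3 a1 a2 a3 + 2 ^ (r2 + r3 + 2) + 2 ^ r2 / real r1 - 1
             + (if r2 \<ge> 1 then 2 ^ r3 else 2 ^ (r3 + 1) * ln (real n))"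
proof -
  define A where "A = real r1 + a1"
  define q where "q = nat \<lfloor>A - 1\<rfloor>"
  have q: "real q \<le> A - 1" "A - 1 < real q + 1"
    using assms by (auto simp: q_def A_def) linarith+
  have q_bounds: "r2 \<le> q" "r3 + 1 \<le> q" "n \<le> q + r2 + r3 + 3"
    using assms q unfolding A_def by linarith+
  have shifted: "real (r1 - 1) + a1 = A - 1" "real (r3 + 1) + a3 = real r3 + a3 + 1"
    using assms by (auto simp: A_def)
  have "n > 0"
    using assms by simp
  then have "frakL n (r1 - 1) r2 (r3 + 1) a1 a2 a3 = lebesgue_gchoose n (A - 1) (real r2 + a2) (real r3 + a3 + 1)"
    by (simp only: frakL_eq_lebesgue_gchoose shifted)
  also have "\<dots> \<le> frakL n r1 r2 r3 a1 a2 a3 + shift_excess n A (real r2 + a2) (real r3 + a3)"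
    using lebesgue_gchoose_shift_le q assms by (simp add: frakL_eq_lebesgue_gchoose A_def)
  also have "shift_excess n A (real r2 + a2) (real r3 + a3) \<le> 2 ^ (r2 + r3 + 2)"
    using shift_excess_le_two_power[OF q q_bounds] assms by simp
  finally have "frakL n (r1 - 1) r2 (r3 + 1) a1 a2 a3 \<le> frakL n r1 r2 r3 a1 a2 a3 + 2 ^ (r2 + r3 + 2)"
    by simp
  moreover have "1 \<le> (2::real) ^ (r3 + 1) * ln (real n)"
    using mult_mono[OF one_le_power[of "2::real" "r3 + 1"] one_le_ln_of_nat[of n]] assms by simp
  then have "1 \<le> (if r2 \<ge> 1 then 2 ^ r3 else 2 ^ (r3 + 1) * ln (real n))"
    by simp
  moreover have "0 \<le> (2::real) ^ r2 / real r1"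
    by simp
  ultimately show ?thesis
    by linarith
qed

end
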